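(* Let $n\in\{1,2,3\}$, let $\Omega\subset\mathbb{R}^n$ be an unbounded Lebesgue measurable set, let $e:\Omega\to\mathbb{C}$ be a bounded measurable function, and set $B_N=\Omega\cap\{x\in\mathbb{R}^n:|x|\le N\}$. Assume there are functions $d(N)$ (not depending on $\lambda$) and $g(\lambda)$ such that for every $\lambda\in\mathbb{C}\setminus[0,\infty)$, \[ \int_{B_N}\frac{|e(x)|^2}{|x|^2-\lambda}\,d^nx=d(N)+g(\lambda)+o\big(N^{\lfloor n/2\rfloor-1}\big)\qquad (N\to\infty). \] Put $a_n=\frac{g(i)-g(-i)}{2i}$, $b_n=\frac{g(i)+g(-i)}{2}$. Let $\theta\in(0,2\pi)$, $\alpha=\cot(\theta/2)$, and let $Q_\alpha$ be the operator defined in the context. Then for every $\lambda\in\rho(Q_\alpha)\cap\rho(Q_0)$ and every $\phi\in L^2(\Omega)$, \[ R(\lambda,Q_\alpha)\phi=R(\lambda,Q_0)\phi+\frac{1}{\frac{a_n}{\alpha}+b_n-g(\lambda)}\left(\int_{\Omega}\bar e(x)\,\frac{\phi(x)}{\lambda-|x|^2}\,d^nx\right)\psi_\lambda ,\qquad \psi_\lambda(x)=\frac{e(x)}{|x|^2-\lambda}. \] Moreover $R(\lambda,Q_\alpha)-R(\lambda,Q_0)$ is a trace class operator.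
   Context: $R(\lambda,T)=(\lambda I-T)^{-1}$ and $\rho(T)$ is the resolvent set. $Q_0$ is the maximal multiplication operator in $L^2(\Omega)$: $\mathrm{dom}(Q_0)=\{f\in L^2(\Omega): |x|^2f\in L^2(\Omega)\}$, $(Q_0f)(x)=|x|^2f(x)$. $\dot Q$ is its restriction to $\{f\in\mathrm{dom}(Q_0):\int_\Omega \bar e(x)f(x)\,d^nx=0\}$ (closure taken). For $\lambda\notin[0,\infty)$, $\psi_\lambda(x)=e(x)/(|x|^2-\lambda)$. For $\theta\in(0,2\pi)$ and $\alpha=\cot(\theta/2)$, $Q_\alpha$ is the operator with domain $\{h+c(\psi_i+e^{i\theta}\psi_{-i}): h\in\mathrm{dom}(\dot Q),\,c\in\mathbb{C}\}$ acting by $Q_\alpha(h+c(\psi_i+e^{i\theta}\psi_{-i}))=|x|^2h+c(i\psi_i-ie^{i\theta}\psi_{-i})$ (the von Neumann self-adjoint extensions of $\dot Q$); $\theta=\pi$, i.e. $\alpha=0$, gives $Q_0$, and for $\alpha=0$ the fraction $1/(a_n/\alpha+b_n-g(\lambda))$ is interpreted as $0$. *)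

theory Defs
  imports "HOL-Analysis.Analysis" "HOL-Library.Landau_Symbols"
begin

text \<open>Concrete model of L2(Omega) for Omega a subset of R^n (n = CARD('n)):
  elements are represented by measurable functions, identified up to
  equality almost everywhere on Omega.\<close>

definition L2 :: "(real^'n) set \<Rightarrow> (real^'n \<Rightarrow> complex) set" where
  "L2 \<Omega> = {f. set_borel_measurable lebesgue \<Omega> f \<and>
                 set_integrable lebesgue \<Omega> (\<lambda>x. (cmod (f x))^2)}"

definition l2norm :: "(real^'n) set \<Rightarrow> (real^'n \<Rightarrow> complex) \<Rightarrow> real" where
  "l2norm \<Omega> f = sqrt (LINT x:\<Omega>|lebesgue. (cmod (f x))^2)"

definition l2inner :: "(real^'n) set \<Rightarrow> (real^'n \<Rightarrow> complex) \<Rightarrow> (real^'n \<Rightarrow> complex) \<Rightarrow> complex" where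
  "l2inner \<Omega> f g = (LINT x:\<Omega>|lebesgue. f x * cnj (g x))"

definition aeq :: "(real^'n) set \<Rightarrow> (real^'n \<Rightarrow> complex) \<Rightarrow> (real^'n \<Rightarrow> complex) \<Rightarrow> bool" where
  "aeq \<Omega> f g \<longleftrightarrow> (AE x in lebesgue. x \<in> \<Omega> \<longrightarrow> f x = g x)"

text \<open>Operators in L2(Omega) are represented by their graphs (sets of pairs).\<close>

definition Q0 :: "(real^'n) set \<Rightarrow> ((real^'n \<Rightarrow> complex) \<times> (real^'n \<Rightarrow> complex)) set" where
  "Q0 \<Omega> = {(f, g). f \<in> L2 \<Omega> \<and> g \<in> L2 \<Omega> \<and>
              aeq \<Omega> g (\<lambda>x. complex_of_real ((norm x)^2) * f x)}"

definition Qdot_pre :: "(real^'n) set \<Rightarrow> (real^'n \<Rightarrow> complex) \<Rightarrow>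
    ((real^'n \<Rightarrow> complex) \<times> (real^'n \<Rightarrow> complex)) set" where
  "Qdot_pre \<Omega> e = {(f, g). (f, g) \<in> Q0 \<Omega> \<and> (LINT x:\<Omega>|lebesgue. cnj (e x) * f x) = 0}"

definition graph_closure :: "(real^'n) set \<Rightarrow> ((real^'n \<Rightarrow> complex) \<times> (real^'n \<Rightarrow> complex)) set \<Rightarrow>
    ((real^'n \<Rightarrow> complex) \<times> (real^'n \<Rightarrow> complex)) set" where
  "graph_closure \<Omega> G = {(f, g). f \<in> L2 \<Omega> \<and> g \<in> L2 \<Omega> \<and>
     (\<exists>F H. (\<forall>k. (F k, H k) \<in> G) \<and>
        (\<lambda>k. l2norm \<Omega> (\<lambda>x. F k x - f x)) \<longlonglongrightarrow> 0 \<and>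
        (\<lambda>k. l2norm \<Omega> (\<lambda>x. H k x - g x)) \<longlonglongrightarrow> 0)}"

definition Qdot :: "(real^'n) set \<Rightarrow> (real^'n \<Rightarrow> complex) \<Rightarrow>
    ((real^'n \<Rightarrow> complex) \<times> (real^'n \<Rightarrow> complex)) set" where
  "Qdot \<Omega> e = graph_closure \<Omega> (Qdot_pre \<Omega> e)"

definition psi :: "(real^'n \<Rightarrow> complex) \<Rightarrow> complex \<Rightarrow> real^'n \<Rightarrow> complex" where
  "psi e l = (\<lambda>x. e x / (complex_of_real ((norm x)^2) - l))"

text \<open>Von Neumann self-adjoint extension Q_alpha, alpha = cot(theta/2).\<close>
definition Qalpha :: "(real^'n) set \<Rightarrow> (real^'n \<Rightarrow> complex) \<Rightarrow> real \<Rightarrow>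
    ((real^'n \<Rightarrow> complex) \<times> (real^'n \<Rightarrow> complex)) set" where
  "Qalpha \<Omega> e \<theta> = {(f, g). f \<in> L2 \<Omega> \<and> g \<in> L2 \<Omega> \<and>
     (\<exists>h k c. (h, k) \<in> Qdot \<Omega> e \<and>
        aeq \<Omega> f (\<lambda>x. h x + c * (psi e \<i> x + exp (\<i> * of_real \<theta>) * psi e (- \<i>) x)) \<and>
        aeq \<Omega> g (\<lambda>x. k x + c * (\<i> * psi e \<i> x - \<i> * exp (\<i> * of_real \<theta>) * psi e (- \<i>) x)))}"

text \<open>R is (a representative of) the resolvent R(l,T) = (l I - T)^-1:
  l I - T is injective, every phi in L2 has preimage R phi, and R is bounded.\<close>
definition is_resolvent :: "(real^'n) set \<Rightarrow> ((real^'n \<Rightarrow> complex) \<times> (real^'n \<Rightarrow> complex)) set \<Rightarrow>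
    complex \<Rightarrow> ((real^'n \<Rightarrow> complex) \<Rightarrow> (real^'n \<Rightarrow> complex)) \<Rightarrow> bool" where
  "is_resolvent \<Omega> T l R \<longleftrightarrow>
     (\<forall>\<phi> \<in> L2 \<Omega>. R \<phi> \<in> L2 \<Omega> \<and> (R \<phi>, \<lambda>x. l * R \<phi> x - \<phi> x) \<in> T) \<and>
     (\<forall>f g. (f, g) \<in> T \<longrightarrow> aeq \<Omega> (\<lambda>x. l * f x - g x) (\<lambda>x. 0) \<longrightarrow> aeq \<Omega> f (\<lambda>x. 0)) \<and>
     (\<exists>C. \<forall>\<phi> \<in> L2 \<Omega>. l2norm \<Omega> (R \<phi>) \<le> C * l2norm \<Omega> \<phi>)"

definition resolvent_set :: "(real^'n) set \<Rightarrow> ((real^'n \<Rightarrow> complex) \<times> (real^'n \<Rightarrow> complex)) set \<Rightarrow>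
    complex set" where
  "resolvent_set \<Omega> T = {l. \<exists>R. is_resolvent \<Omega> T l R}"

definition trace_class :: "(real^'n) set \<Rightarrow> ((real^'n \<Rightarrow> complex) \<Rightarrow> (real^'n \<Rightarrow> complex)) \<Rightarrow> bool" where
  "trace_class \<Omega> T \<longleftrightarrow>
     (\<exists>u v. (\<forall>k::nat. u k \<in> L2 \<Omega> \<and> v k \<in> L2 \<Omega>) \<and>
        summable (\<lambda>k. l2norm \<Omega> (u k) * l2norm \<Omega> (v k)) \<and>
        (\<forall>\<phi> \<in> L2 \<Omega>. (\<lambda>m. l2norm \<Omega> (\<lambda>x. T \<phi> x - (\<Sum>k<m. l2inner \<Omega> \<phi> (v k) * u k x))) \<longlonglongrightarrow> 0))"

end

theory Submission
  imports Defs
begin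

text \<open>For \<open>\<lambda> \<notin> [0,\<infinity>)\<close> the function \<open>\<psi>\<^sub>\<lambda>\<close> lies in \<open>L\<^sup>2\<close> because \<open>(1 + |x|\<^sup>2)\<^sup>-\<^sup>2\<close> is
  integrable for \<open>n \<le> 3\<close>, and the divergent part \<open>d(N)\<close> cancels in differences, so that
  \<open>g(\<lambda>) - g(\<mu>) = \<langle>\<psi>\<^sub>\<lambda> - \<psi>\<^sub>\<mu>, e\<rangle>\<close>.  Write \<open>K(\<lambda>) = g(i) + e\<^sup>i\<^sup>\<theta> g(-i) - (1 + e\<^sup>i\<^sup>\<theta>) g(\<lambda>)\<close>,
  which equals \<open>(1 + e\<^sup>i\<^sup>\<theta>)(a/\<alpha> + b - g(\<lambda>))\<close>.  If \<open>\<langle>R(\<lambda>,Q\<^sub>0)\<phi>, e\<rangle> = c K(\<lambda>)\<close>, then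
  \<open>f = R(\<lambda>,Q\<^sub>0)\<phi> + c (1 + e\<^sup>i\<^sup>\<theta>) \<psi>\<^sub>\<lambda>\<close> differs from an element of \<open>dom Q\<^sup>.\<close> by
  \<open>c (\<psi>\<^sub>i + e\<^sup>i\<^sup>\<theta> \<psi>\<^sub>-\<^sub>i)\<close>, so \<open>f \<in> dom Q\<^sub>\<alpha>\<close> and \<open>(\<lambda> - Q\<^sub>\<alpha>) f = \<phi>\<close>; injectivity of
  \<open>\<lambda> - Q\<^sub>\<alpha>\<close> gives \<open>f = R(\<lambda>,Q\<^sub>\<alpha>)\<phi>\<close>.  When \<open>K(\<lambda>) = 0\<close> the same construction makes
  \<open>\<psi>\<^sub>\<lambda>\<close> an eigenvector of \<open>Q\<^sub>\<alpha>\<close> (or, for \<open>\<theta> = \<pi>\<close>, forces \<open>\<integral> |e|\<^sup>2/(|x|\<^sup>4+1) = 0\<close>),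
  so \<open>e = 0\<close> and both sides vanish.  The difference of resolvents has rank one.\<close>

definition decay_weight :: "'a::real_normed_vector \<Rightarrow> real" where
  "decay_weight x = 1 / (1 + (norm x)^2)^2"

lemma borel_measurable_decay_weight [measurable]:
  "(decay_weight :: 'a::{real_normed_vector,second_countable_topology} \<Rightarrow> real) \<in> borel_measurable borel"
  unfolding decay_weight_def by measurable

lemma decay_weight_nonneg [simp]: "0 \<le> decay_weight x"
  by (simp add: decay_weight_def)

text \<open>On the dyadic shell \<open>2^k < |x| \<le> 2^(k+1)\<close> the weight is at most \<open>16^-k\<close>.\<close>

lemma decay_weight_le_dyadic_sum:
  fixes x :: "'a::real_normed_vector"
  shows "ennreal (decay_weight x) \<le> (\<Sum>k. ennreal ((1/16)^k) * indicator (cball 0 (2^(k+1))) x)"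
proof -
  define P where "P k \<longleftrightarrow> norm x \<le> 2^(k+1)" for k :: nat
  obtain n where "norm x < 2^n" using real_arch_pow[of 2 "norm x"] by auto
  then have "P n" unfolding P_def by (smt (verit) one_le_numeral power_increasing le_add1)
  define k where "k = (LEAST k. P k)"
  have Pk: "P k" unfolding k_def using \<open>P n\<close> by (rule LeastI)
  have "decay_weight x \<le> (1/16)^k"
  proof (cases k)
    case 0 then show ?thesis by (simp add: decay_weight_def divide_le_eq_1)
  next
    case (Suc j)
    then have "\<not> P j" unfolding k_def by (metis Suc_n_not_le_n Least_le)
    then have "((2::real)^(j+1))^4 < (norm x)^4"
      unfolding P_def by (intro power_strict_mono) auto
    also have "\<dots> \<le> (1 + (norm x)^2)^2"
      by (simp add: power2_eq_square power4_eq_xxxx algebra_simps)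
    also have "((2::real)^(j+1))^4 = (2^4)^k"
      using Suc by (simp only: power_mult[symmetric] mult.commute Suc_eq_plus1)
    finally have "16^k < (1 + (norm x)^2)^2"
      by simp
    then show ?thesis
      unfolding decay_weight_def power_one_over
      by (intro divide_left_mono mult_pos_pos zero_less_power add_pos_nonneg) auto
  qed
  then have "ennreal (decay_weight x) \<le> ennreal ((1/16)^k) * indicator (cball 0 (2^(k+1))) x"
    using Pk unfolding P_def by (simp add: indicator_def)
  also have "\<dots> \<le> (\<Sum>k. ennreal ((1/16)^k) * indicator (cball 0 (2^(k+1))) x)"
    using sum_le_suminf[OF summableI, of "{k}"] by simp
  finally show ?thesis .
qed

lemma integrable_decay_weight:
  assumes "DIM('a::euclidean_space) \<le> 3"
  shows "integrable lborel (decay_weight :: 'a \<Rightarrow> real)"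
proof (rule integrableI_nonneg)
  define V where "V = unit_ball_vol (real DIM('a))"
  have "V \<ge> 0" unfolding V_def by simp
  have shell_bound: "(1/16::real)^k * (V * (2^(k+1))^DIM('a)) \<le> 8 * V * (1/2)^k" for k :: nat
  proof -
    have "((2::real)^(k+1))^DIM('a) \<le> (2^(k+1))^3"
      using assms one_le_power[of "2::real" "k+1"] by (intro power_increasing) auto
    also have "\<dots> = (2^3)^(k+1)"
      by (simp only: power_mult[symmetric] mult.commute)
    also have "\<dots> = 8 * 8^k"
      by simp
    finally have "(1/16::real)^k * (V * (2^(k+1))^DIM('a)) \<le> (1/16)^k * (V * (8 * 8^k))"
      using \<open>V \<ge> 0\<close> by (intro mult_left_mono) auto
    also have "\<dots> = 8 * V * (1/2)^k"
      by (simp add: power_mult_distrib[symmetric])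
    finally show ?thesis .
  qed
  have "(\<integral>\<^sup>+x. ennreal (decay_weight (x::'a)) \<partial>lborel)
      \<le> (\<integral>\<^sup>+x. (\<Sum>k. ennreal ((1/16)^k) * indicator (cball (0::'a) (2^(k+1))) x) \<partial>lborel)"
    by (intro nn_integral_mono decay_weight_le_dyadic_sum)
  also have "\<dots> = (\<Sum>k. ennreal ((1/16)^k) * emeasure lborel (cball (0::'a) (2^(k+1))))"
    by (subst nn_integral_suminf)
      (auto intro!: borel_measurable_times_ennreal borel_measurable_indicator borel_closed
        simp: nn_integral_cmult_indicator)
  also have "\<dots> = (\<Sum>k. ennreal ((1/16)^k * (V * (2^(k+1))^DIM('a))))"
    by (simp add: emeasure_cball V_def ennreal_mult)
  also have "\<dots> \<le> (\<Sum>k. ennreal (8 * V * (1/2)^k))"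
    by (intro suminf_le summableI ennreal_leI shell_bound)
  also have "\<dots> = ennreal (\<Sum>k. 8 * V * (1/2)^k)"
    using \<open>V \<ge> 0\<close> by (intro suminf_ennreal2 summable_mult summable_geometric) auto
  finally show "(\<integral>\<^sup>+x. ennreal (decay_weight (x::'a)) \<partial>lborel) < \<infinity>"
    using le_less_trans by fastforce
qed auto

lemma borel_measurable_cnj [measurable (raw)]:
  "f \<in> borel_measurable M \<Longrightarrow> (\<lambda>x. cnj (f x)) \<in> borel_measurable M"
  using borel_measurable_continuous_on[OF continuous_on_cnj[OF continuous_on_id]] by blast

lemma of_real_minus_off_ray_nonzero:
  assumes "l \<notin> complex_of_real ` {0..}" "s \<ge> 0"
  shows "complex_of_real s - l \<noteq> 0"
  using assms by auto

lemma off_ray_cnj: "l \<notin> complex_of_real ` {0..} \<Longrightarrow> cnj l \<notin> complex_of_real ` {0..}"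
  by (metis complex_cnj_cnj complex_cnj_complex_of_real image_iff)

lemma i_off_ray: "\<i> \<notin> complex_of_real ` {0..}"
  and minus_i_off_ray: "- \<i> \<notin> complex_of_real ` {0..}"
  by (auto simp: complex_eq_iff)

lemma off_ray_norm_lower_bound:
  assumes "l \<notin> complex_of_real ` {0..}"
  obtains c where "c > 0" "\<And>s. s \<ge> 0 \<Longrightarrow> c * (1 + s) \<le> cmod (complex_of_real s - l)"
proof (cases "Im l = 0")
  case True
  then have "Re l < 0"
    using assms by (metis atLeast_iff complex_is_Real_iff image_eqI linorder_not_le of_real_Re)
  define c where "c = min 1 (- Re l)"
  have "c * (1 + s) \<le> cmod (complex_of_real s - l)" if "s \<ge> 0" for s
  proof -
    have "c * s \<le> s"
      using that \<open>Re l < 0\<close> unfolding c_def by (intro mult_left_le_one_le) auto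
    then have "c * (1 + s) \<le> s - Re l" unfolding c_def by (simp add: algebra_simps)
    also have "\<dots> \<le> cmod (complex_of_real s - l)"
      using abs_Re_le_cmod[of "complex_of_real s - l"] by simp
    finally show ?thesis .
  qed
  moreover have "c > 0" using \<open>Re l < 0\<close> unfolding c_def by auto
  ultimately show ?thesis using that by blast
next
  case False
  define c where "c = min (1/2) (\<bar>Im l\<bar> / (2 * cmod l + 2))"
  have "2 * cmod l + 2 > 0" using norm_ge_zero[of l] by linarith
  have "c * (1 + s) \<le> cmod (complex_of_real s - l)" if s: "s \<ge> 0" for s
  proof (cases "s \<ge> 2 * cmod l + 1")
    case True
    have "c \<le> 1/2" unfolding c_def by (rule min.cobounded1)
    then have "c * (1 + s) \<le> (1/2) * (1 + s)"
      using s by (intro mult_right_mono) auto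
    also have "\<dots> \<le> s - cmod l" using True by simp
    also have "\<dots> \<le> cmod (complex_of_real s - l)"
      using norm_triangle_ineq2[of "complex_of_real s" l] s by simp
    finally show ?thesis .
  next
    case False
    have "c * (1 + s) \<le> \<bar>Im l\<bar> / (2 * cmod l + 2) * (2 * cmod l + 2)"
      using s False unfolding c_def by (intro mult_mono) auto
    also have "\<dots> = \<bar>Im (complex_of_real s - l)\<bar>"
      using \<open>2 * cmod l + 2 > 0\<close> by simp
    also have "\<dots> \<le> cmod (complex_of_real s - l)" by (rule abs_Im_le_cmod)
    finally show ?thesis .
  qed
  moreover have "c > 0"
    using False \<open>2 * cmod l + 2 > 0\<close> unfolding c_def by auto
  ultimately show ?thesis using that by blast
qed

lemma of_real_norm_sq_mult_psi:
  assumes "l \<notin> complex_of_real ` {0..}"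
  shows "complex_of_real ((norm x)^2) * psi e l x = e x + l * psi e l x"
  using of_real_minus_off_ray_nonzero[OF assms, of "(norm x)^2"]
  unfolding psi_def by (simp add: field_simps)

lemma smallo_powr_nonpos_tendsto_zero:
  fixes f :: "real \<Rightarrow> real"
  assumes "f \<in> o[at_top](\<lambda>x. x powr p)" "p \<le> 0"
  shows "(f \<longlongrightarrow> 0) at_top"
proof -
  have "eventually (\<lambda>x. norm (x powr p) \<le> 1 * norm (1::real)) at_top"
    using eventually_ge_at_top[of "1::real"]
    by eventually_elim (use powr_mono[OF assms(2)] in auto)
  then have "(\<lambda>x. x powr p) \<in> O[at_top](\<lambda>_. 1::real)" by (rule bigoI)
  with assms(1) have "f \<in> o[at_top](\<lambda>_. 1)" by (rule landau_o.small_big_trans)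
  then show ?thesis using smalloD_tendsto by fastforce
qed

lemma cis_cot_half:
  fixes \<theta> :: real and A B z :: complex
  assumes "0 < \<theta>" "\<theta> < 2 * pi" "\<theta> \<noteq> pi"
  shows "1 + cis \<theta> \<noteq> 0" and "cot (\<theta> / 2) \<noteq> 0"
    and "A + cis \<theta> * B - (1 + cis \<theta>) * z
           = (1 + cis \<theta>) * ((A - B) / (2 * \<i>) / complex_of_real (cot (\<theta> / 2)) + (A + B) / 2 - z)"
proof -
  define u where "u = \<theta> / 2"
  have u: "0 < u" "u < pi" "u \<noteq> pi / 2" using assms unfolding u_def by auto
  have "sin u > 0" using u by (intro sin_gt_zero) auto
  have "cos u \<noteq> 0" using cos_inj_pi[of u "pi / 2"] u by auto
  define co where "co = complex_of_real (cos u)"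
  define si where "si = complex_of_real (sin u)"
  have "co \<noteq> 0" "si \<noteq> 0"
    using \<open>cos u \<noteq> 0\<close> \<open>sin u > 0\<close> unfolding co_def si_def by auto
  have pyth: "co^2 + si^2 = 1"
    unfolding co_def si_def by (metis of_real_add of_real_power of_real_1 sin_cos_squared_add2)
  have "cis \<theta> = cis u ^ 2" unfolding u_def power2_eq_square cis_mult field_sum_of_halves ..
  also have "cis u = co + \<i> * si" unfolding co_def si_def by (simp add: complex_eq_iff)
  finally have E: "cis \<theta> = (co + \<i> * si)^2" .
  have one_plus_E: "1 + cis \<theta> = 2 * co * (co + \<i> * si)"
    unfolding E using pyth by (simp add: power2_eq_square algebra_simps)
  have "co + \<i> * si \<noteq> 0" using \<open>si \<noteq> 0\<close> by (auto simp: co_def si_def complex_eq_iff)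
  then show "1 + cis \<theta> \<noteq> 0" unfolding one_plus_E using \<open>co \<noteq> 0\<close> by simp
  show "cot (\<theta> / 2) \<noteq> 0"
    using \<open>cos u \<noteq> 0\<close> \<open>sin u > 0\<close> unfolding cot_def u_def by simp
  have cot: "complex_of_real (cot (\<theta> / 2)) = co / si"
    unfolding co_def si_def u_def cot_def by simp
  show "A + cis \<theta> * B - (1 + cis \<theta>) * z
      = (1 + cis \<theta>) * ((A - B) / (2 * \<i>) / complex_of_real (cot (\<theta> / 2)) + (A + B) / 2 - z)"
    unfolding one_plus_E cot unfolding E using \<open>co \<noteq> 0\<close> \<open>si \<noteq> 0\<close> pyth
    by (simp add: field_simps) (simp add: power2_eq_square algebra_simps, algebra)
qed

lemma l2norm_eq_0_if_aeq_0: "aeq \<Omega> f (\<lambda>x. 0) \<Longrightarrow> l2norm \<Omega> f = 0"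
  unfolding l2norm_def aeq_def set_lebesgue_integral_def
  by (subst integral_eq_zero_AE) (auto elim: eventually_mono)

lemma zero_in_L2: "(\<lambda>x. 0) \<in> L2 \<Omega>"
  by (simp add: L2_def set_borel_measurable_def set_integrable_def)

lemma trace_class_rank_one:
  assumes "u \<in> L2 \<Omega>" "v \<in> L2 \<Omega>"
    and "\<forall>\<phi> \<in> L2 \<Omega>. aeq \<Omega> (T \<phi>) (\<lambda>x. l2inner \<Omega> \<phi> v * u x)"
  shows "trace_class \<Omega> T"
  unfolding trace_class_def
proof (intro exI conjI ballI)
  define us where "us k = (if k = 0 then u else (\<lambda>x. 0))" for k :: nat
  define vs where "vs k = (if k = 0 then v else (\<lambda>x. 0))" for k :: nat
  show "\<forall>k. us k \<in> L2 \<Omega> \<and> vs k \<in> L2 \<Omega>"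
    unfolding us_def vs_def using assms(1,2) zero_in_L2 by auto
  have "(\<lambda>k. l2norm \<Omega> (us k) * l2norm \<Omega> (vs k))
      = (\<lambda>k. if k = 0 then l2norm \<Omega> u * l2norm \<Omega> v else 0)"
    unfolding us_def vs_def by (auto simp: l2norm_def)
  then show "summable (\<lambda>k. l2norm \<Omega> (us k) * l2norm \<Omega> (vs k))"
    using sums_summable[OF sums_single[of 0]] by simp
  fix \<phi> assume "\<phi> \<in> L2 \<Omega>"
  have "l2norm \<Omega> (\<lambda>x. T \<phi> x - (\<Sum>k<m. l2inner \<Omega> \<phi> (vs k) * us k x)) = 0" if "m \<ge> 1" for m
  proof (rule l2norm_eq_0_if_aeq_0)
    have "l2inner \<Omega> \<phi> (vs k) * us k x = (if k = 0 then l2inner \<Omega> \<phi> v * u x else 0)" for k x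
      by (simp add: us_def vs_def)
    then have "(\<Sum>k<m. l2inner \<Omega> \<phi> (vs k) * us k x) = l2inner \<Omega> \<phi> v * u x" for x
      using that by simp
    then show "aeq \<Omega> (\<lambda>x. T \<phi> x - (\<Sum>k<m. l2inner \<Omega> \<phi> (vs k) * us k x)) (\<lambda>x. 0)"
      using assms(3) \<open>\<phi> \<in> L2 \<Omega>\<close> unfolding aeq_def by (auto elim: eventually_mono)
  qed
  then show "(\<lambda>m. l2norm \<Omega> (\<lambda>x. T \<phi> x - (\<Sum>k<m. l2inner \<Omega> \<phi> (vs k) * us k x))) \<longlonglongrightarrow> 0"
    by (intro tendsto_eventually eventually_sequentiallyI[of 1]) auto
qed

lemma l2inner_minus_psi_cnj:
  "l2inner \<Omega> \<phi> (\<lambda>x. - psi e (cnj l) x)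
     = (LINT y:\<Omega>|lebesgue. cnj (e y) * (\<phi> y / (l - complex_of_real ((norm y)^2))))"
proof -
  have "\<phi> y * cnj (- psi e (cnj l) y) = cnj (e y) * (\<phi> y / (l - complex_of_real ((norm y)^2)))" for y
    unfolding psi_def by (simp add: minus_divide_right)
  then show ?thesis unfolding l2inner_def by simp
qed

lemma is_resolventD:
  assumes "is_resolvent \<Omega> T l R"
  shows "\<phi> \<in> L2 \<Omega> \<Longrightarrow> (R \<phi>, \<lambda>x. l * R \<phi> x - \<phi> x) \<in> T"
    and "(f, G) \<in> T \<Longrightarrow> aeq \<Omega> (\<lambda>x. l * f x - G x) (\<lambda>x. 0) \<Longrightarrow> aeq \<Omega> f (\<lambda>x. 0)"
  using assms unfolding is_resolvent_def by blast+

locale bounded_profile =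
  fixes \<Omega> :: "(real^'n) set" and e :: "real^'n \<Rightarrow> complex" and M :: real
  assumes dim_le_3: "CARD('n) \<le> 3"
    and sets_\<Omega>: "\<Omega> \<in> sets lebesgue"
    and measurable_e: "set_borel_measurable lebesgue \<Omega> e"
    and bounded_e: "\<forall>x\<in>\<Omega>. cmod (e x) \<le> M"
begin

abbreviation \<mu> :: "(real^'n) measure" where
  "\<mu> \<equiv> restrict_space lebesgue \<Omega>"

lemma space_\<mu> [simp]: "space \<mu> = \<Omega>"
  using sets_\<Omega> by simp

lemma borel_measurable_ident [measurable]: "(\<lambda>x. x) \<in> borel_measurable \<mu>"
  by (intro measurable_restrict_space1 measurable_completion) simp

lemma borel_measurable_e [measurable]: "e \<in> borel_measurable \<mu>"
  using measurable_e sets_\<Omega> unfolding set_borel_measurable_def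
  by (simp add: borel_measurable_restrict_space_iff)

lemma mem_L2_iff: "f \<in> L2 \<Omega> \<longleftrightarrow> f \<in> borel_measurable \<mu> \<and> integrable \<mu> (\<lambda>x. (cmod (f x))^2)"
  unfolding L2_def set_borel_measurable_def set_integrable_def
  using sets_\<Omega> by (simp add: borel_measurable_restrict_space_iff integrable_restrict_space)

lemma L2_borel_measurable: "f \<in> L2 \<Omega> \<Longrightarrow> f \<in> borel_measurable \<mu>"
  unfolding mem_L2_iff by simp

lemma aeq_iff: "aeq \<Omega> f g \<longleftrightarrow> (AE x in \<mu>. f x = g x)"
  unfolding aeq_def using sets_\<Omega> by (simp add: AE_restrict_space_iff)

lemma set_integral_eq_integral_\<mu>:
  fixes f :: "real^'n \<Rightarrow> 'b::{banach,second_countable_topology}"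
  shows "(LINT x:\<Omega>|lebesgue. f x) = integral\<^sup>L \<mu> f"
  unfolding set_lebesgue_integral_def using sets_\<Omega> integral_restrict_space[of \<Omega> lebesgue f] by simp

lemma integrable_decay_weight_\<mu>: "integrable \<mu> decay_weight"
proof -
  have "integrable lborel (decay_weight :: real^'n \<Rightarrow> real)"
    using dim_le_3 by (intro integrable_decay_weight) simp
  then have "integrable lebesgue (decay_weight :: real^'n \<Rightarrow> real)"
    by (simp add: integrable_completion)
  then have "integrable lebesgue (\<lambda>x. indicator \<Omega> x *\<^sub>R decay_weight x)"
    by (rule integrable_mult_indicator[OF sets_\<Omega>])
  then show ?thesis
    using sets_\<Omega> by (simp add: integrable_restrict_space)
qed

lemma L2_add: "f \<in> L2 \<Omega> \<Longrightarrow> g \<in> L2 \<Omega> \<Longrightarrow> (\<lambda>x. f x + g x) \<in> L2 \<Omega>"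
  unfolding mem_L2_iff
proof (elim conjE, intro conjI)
  assume [measurable]: "f \<in> borel_measurable \<mu>" "g \<in> borel_measurable \<mu>"
    and int: "integrable \<mu> (\<lambda>x. (cmod (f x))^2)" "integrable \<mu> (\<lambda>x. (cmod (g x))^2)"
  show "(\<lambda>x. f x + g x) \<in> borel_measurable \<mu>" by measurable
  have "(cmod (f x + g x))^2 \<le> 2 * (cmod (f x))^2 + 2 * (cmod (g x))^2" for x
  proof -
    have "(cmod (f x + g x))^2 \<le> (cmod (f x) + cmod (g x))^2"
      by (intro power_mono norm_triangle_ineq) auto
    also have "\<dots> \<le> 2 * (cmod (f x))^2 + 2 * (cmod (g x))^2"
      using zero_le_power2[of "cmod (f x) - cmod (g x)"] unfolding power2_sum power2_diff by linarith
    finally show ?thesis .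
  qed
  then have "AE x in \<mu>. norm ((cmod (f x + g x))^2) \<le> norm (2 * (cmod (f x))^2 + 2 * (cmod (g x))^2)"
    by (intro AE_I2) simp
  then show "integrable \<mu> (\<lambda>x. (cmod (f x + g x))^2)"
    by (rule Bochner_Integration.integrable_bound[rotated 2]) (simp add: int, measurable)
qed

lemma L2_cmult:
  assumes "f \<in> L2 \<Omega>"
  shows "(\<lambda>x. a * f x) \<in> L2 \<Omega>"
proof -
  have [measurable]: "f \<in> borel_measurable \<mu>" using assms by (rule L2_borel_measurable)
  have "(\<lambda>x. a * f x) \<in> borel_measurable \<mu>" by measurable
  then show ?thesis using assms unfolding mem_L2_iff norm_mult power_mult_distrib by simp
qed

lemma L2_diff: "f \<in> L2 \<Omega> \<Longrightarrow> g \<in> L2 \<Omega> \<Longrightarrow> (\<lambda>x. f x - g x) \<in> L2 \<Omega>"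
  using L2_add[OF _ L2_cmult[of g "-1"], of f] by simp

lemma norm_psi_le:
  assumes "c > 0" "\<And>s. s \<ge> 0 \<Longrightarrow> c * (1 + s) \<le> cmod (complex_of_real s - l)"
  shows "cmod (psi e l x) \<le> cmod (e x) / (c * (1 + (norm x)^2))"
proof -
  have le: "c * (1 + (norm x)^2) \<le> cmod (complex_of_real ((norm x)^2) - l)"
    using assms(2)[of "(norm x)^2"] by simp
  have pos: "0 < c * (1 + (norm x)^2)"
    using assms(1) by (intro mult_pos_pos add_pos_nonneg) auto
  then have "0 < cmod (complex_of_real ((norm x)^2) - l)" using le by linarith
  with pos show ?thesis
    unfolding psi_def norm_divide by (intro divide_left_mono[OF le]) simp_all
qed

lemma psi_in_L2:
  assumes l: "l \<notin> complex_of_real ` {0..}"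
  shows "psi e l \<in> L2 \<Omega>"
  unfolding mem_L2_iff
proof
  show [measurable]: "psi e l \<in> borel_measurable \<mu>" unfolding psi_def by measurable
  obtain c where c: "c > 0" "\<And>s. s \<ge> 0 \<Longrightarrow> c * (1 + s) \<le> cmod (complex_of_real s - l)"
    using off_ray_norm_lower_bound[OF l] by blast
  have bound: "(cmod (psi e l x))^2 \<le> (M / c)^2 * decay_weight x" if "x \<in> \<Omega>" for x
  proof -
    have "cmod (psi e l x) \<le> cmod (e x) / (c * (1 + (norm x)^2))" by (rule norm_psi_le[OF c])
    also have "\<dots> \<le> M / (c * (1 + (norm x)^2))"
      using bounded_e that c by (intro divide_right_mono mult_nonneg_nonneg) auto
    finally have "(cmod (psi e l x))^2 \<le> (M / (c * (1 + (norm x)^2)))^2"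
      by (intro power_mono) auto
    then show ?thesis by (simp add: decay_weight_def power_divide power_mult_distrib)
  qed
  have "AE x in \<mu>. norm ((cmod (psi e l x))^2) \<le> norm ((M / c)^2 * decay_weight x)"
    using bound by (intro AE_I2) (simp add: abs_mult)
  show "integrable \<mu> (\<lambda>x. (cmod (psi e l x))^2)"
    by (rule Bochner_Integration.integrable_bound[OF integrable_mult_right[OF integrable_decay_weight_\<mu>]])
      (measurable, fact)
qed

lemma trace_class_resolvent_difference:
  assumes l: "l \<notin> complex_of_real ` {0..}"
    and formula: "\<forall>\<phi> \<in> L2 \<Omega>. aeq \<Omega> (Ra \<phi>) (\<lambda>x. R0 \<phi> x
           + C * (LINT y:\<Omega>|lebesgue. cnj (e y) * (\<phi> y / (l - complex_of_real ((norm y)^2)))) * psi e l x)"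
  shows "trace_class \<Omega> (\<lambda>\<phi> x. Ra \<phi> x - R0 \<phi> x)"
proof (rule trace_class_rank_one)
  show "(\<lambda>x. C * psi e l x) \<in> L2 \<Omega>"
    by (intro L2_cmult psi_in_L2 l)
  show "(\<lambda>x. - psi e (cnj l) x) \<in> L2 \<Omega>"
    using L2_cmult[OF psi_in_L2[OF off_ray_cnj[OF l]], of "-1"] by simp
  show "\<forall>\<phi>\<in>L2 \<Omega>. aeq \<Omega> (\<lambda>x. Ra \<phi> x - R0 \<phi> x)
      (\<lambda>x. l2inner \<Omega> \<phi> (\<lambda>x. - psi e (cnj l) x) * (C * psi e l x))"
  proof
    fix \<phi> assume "\<phi> \<in> L2 \<Omega>"
    with formula show "aeq \<Omega> (\<lambda>x. Ra \<phi> x - R0 \<phi> x)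
        (\<lambda>x. l2inner \<Omega> \<phi> (\<lambda>x. - psi e (cnj l) x) * (C * psi e l x))"
      unfolding l2inner_minus_psi_cnj aeq_def by (auto elim!: eventually_mono simp: algebra_simps)
  qed
qed

lemma mem_Q0D:
  assumes "(r, q) \<in> Q0 \<Omega>"
  shows "r \<in> L2 \<Omega>" "q \<in> L2 \<Omega>" "AE x in \<mu>. q x = complex_of_real ((norm x)^2) * r x"
  using assms unfolding Q0_def aeq_iff by auto

lemma integrable_cnj_e_mult_Q0:
  assumes "(r, q) \<in> Q0 \<Omega>"
  shows "integrable \<mu> (\<lambda>x. cnj (e x) * r x)"
proof -
  note rq = mem_Q0D[OF assms]
  have [measurable]: "r \<in> borel_measurable \<mu>" using rq(1) by (rule L2_borel_measurable)
  have int: "integrable \<mu> (\<lambda>x. (cmod (r x))^2)" "integrable \<mu> (\<lambda>x. (cmod (q x))^2)"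
    using rq(1,2) unfolding mem_L2_iff by auto
  have "AE x in \<mu>. norm (cnj (e x) * r x)
      \<le> norm (\<bar>M\<bar> * ((cmod (r x))^2 + (cmod (q x))^2 + decay_weight x / 2))"
    using rq(3) AE_space
  proof eventually_elim
    case (elim x)
    define a where "a = cmod (r x)"
    define t where "t = 1 + (norm x)^2"
    have "t > 0" unfolding t_def by (simp add: add_pos_nonneg)
    have "t * a = a + cmod (q x)"
      unfolding a_def t_def elim(1) norm_mult norm_of_real by (simp add: algebra_simps)
    \<comment> \<open>\<open>2ab \<le> a\<^sup>2 + b\<^sup>2\<close> with \<open>t a\<close> and \<open>1/t\<close>, then \<open>(a + |q|)\<^sup>2 \<le> 2a\<^sup>2 + 2|q|\<^sup>2\<close>\<close>
    have "2 * a = 2 * (t * a) * (1 / t)" using \<open>t > 0\<close> by simp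
    also have "\<dots> \<le> (t * a)^2 + (1 / t)^2"
      using zero_le_power2[of "t * a - 1 / t"] unfolding power2_diff by linarith
    also have "(t * a)^2 \<le> 2 * a^2 + 2 * (cmod (q x))^2"
      unfolding \<open>t * a = a + cmod (q x)\<close>
      using zero_le_power2[of "a - cmod (q x)"] unfolding power2_sum power2_diff by linarith
    finally have "a \<le> a^2 + (cmod (q x))^2 + decay_weight x / 2"
      unfolding decay_weight_def t_def by (simp add: power_one_over)
    moreover have "cmod (e x) \<le> \<bar>M\<bar>" using bounded_e elim(2) by force
    ultimately show ?case
      unfolding a_def norm_mult complex_mod_cnj
      by (simp add: abs_mult mult_mono' add_nonneg_nonneg)
  qed
  then show ?thesis
    by (rule Bochner_Integration.integrable_bound[rotated 2])
      (simp add: int integrable_decay_weight_\<mu>, measurable)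
qed

lemma Q0_diff:
  assumes "(r, q) \<in> Q0 \<Omega>" "(r', q') \<in> Q0 \<Omega>"
  shows "(\<lambda>x. r x - r' x, \<lambda>x. q x - q' x) \<in> Q0 \<Omega>"
proof -
  note rq = mem_Q0D[OF assms(1)] and rq' = mem_Q0D[OF assms(2)]
  have "AE x in \<mu>. q x - q' x = complex_of_real ((norm x)^2) * (r x - r' x)"
    using rq(3) rq'(3) by eventually_elim (simp add: algebra_simps)
  then show ?thesis using rq rq' unfolding Q0_def aeq_iff by (auto intro: L2_diff)
qed

lemma Qdot_pre_orthogonal:
  assumes "(h, k) \<in> Qdot_pre \<Omega> e"
  shows "integrable \<mu> (\<lambda>x. cnj (e x) * h x)" "integral\<^sup>L \<mu> (\<lambda>x. cnj (e x) * h x) = 0"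
  using assms integrable_cnj_e_mult_Q0 unfolding Qdot_pre_def
  by (auto simp: set_integral_eq_integral_\<mu>)

lemma Qdot_pre_subset_Qdot: "Qdot_pre \<Omega> e \<subseteq> Qdot \<Omega> e"
proof
  fix p assume p: "p \<in> Qdot_pre \<Omega> e"
  obtain h k where [simp]: "p = (h, k)" by fastforce
  have "h \<in> L2 \<Omega>" "k \<in> L2 \<Omega>" using p unfolding Qdot_pre_def Q0_def by auto
  moreover have "(\<lambda>j. l2norm \<Omega> (\<lambda>x. h x - h x)) \<longlonglongrightarrow> 0" "(\<lambda>j. l2norm \<Omega> (\<lambda>x. k x - k x)) \<longlonglongrightarrow> 0"
    by (simp_all add: l2norm_def)
  ultimately show "p \<in> Qdot \<Omega> e"
    using p unfolding Qdot_def graph_closure_def by fastforce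
qed

text \<open>Shifting an approximating sequence by a fixed element of \<open>Qdot_pre\<close> leaves the
  approximation errors unchanged, so no triangle inequality in \<open>L2\<close> is needed here.\<close>

lemma Qdot_diff_Qdot_pre:
  assumes "(h', k') \<in> Qdot \<Omega> e" "(h, k) \<in> Qdot_pre \<Omega> e"
  shows "(\<lambda>x. h' x - h x, \<lambda>x. k' x - k x) \<in> Qdot \<Omega> e"
proof -
  obtain F H where FH: "\<forall>j. (F j, H j) \<in> Qdot_pre \<Omega> e"
    "(\<lambda>j. l2norm \<Omega> (\<lambda>x. F j x - h' x)) \<longlonglongrightarrow> 0" "(\<lambda>j. l2norm \<Omega> (\<lambda>x. H j x - k' x)) \<longlonglongrightarrow> 0"
    and L2': "h' \<in> L2 \<Omega>" "k' \<in> L2 \<Omega>"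
    using assms(1) unfolding Qdot_def graph_closure_def by auto
  have hk: "(h, k) \<in> Q0 \<Omega>" using assms(2) unfolding Qdot_pre_def by auto
  have "(\<lambda>x. F j x - h x, \<lambda>x. H j x - k x) \<in> Qdot_pre \<Omega> e" for j
  proof -
    have "(F j, H j) \<in> Q0 \<Omega>" using FH(1) unfolding Qdot_pre_def by auto
    note orth = Qdot_pre_orthogonal[OF FH(1)[rule_format, of j]] Qdot_pre_orthogonal[OF assms(2)]
    have "integral\<^sup>L \<mu> (\<lambda>x. cnj (e x) * (F j x - h x))
        = integral\<^sup>L \<mu> (\<lambda>x. cnj (e x) * F j x) - integral\<^sup>L \<mu> (\<lambda>x. cnj (e x) * h x)"
      using orth by (simp add: algebra_simps)
    then show ?thesis
      using Q0_diff[OF \<open>(F j, H j) \<in> Q0 \<Omega>\<close> hk] orth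
      unfolding Qdot_pre_def by (simp add: set_integral_eq_integral_\<mu>)
  qed
  moreover have "(\<lambda>x. (F j x - h x) - (h' x - h x)) = (\<lambda>x. F j x - h' x)"
    "(\<lambda>x. (H j x - k x) - (k' x - k x)) = (\<lambda>x. H j x - k' x)" for j
    by auto
  ultimately have "\<exists>F' H'. (\<forall>j. (F' j, H' j) \<in> Qdot_pre \<Omega> e) \<and>
      (\<lambda>j. l2norm \<Omega> (\<lambda>x. F' j x - (h' x - h x))) \<longlonglongrightarrow> 0 \<and>
      (\<lambda>j. l2norm \<Omega> (\<lambda>x. H' j x - (k' x - k x))) \<longlonglongrightarrow> 0"
    using FH by (intro exI[of _ "\<lambda>j x. F j x - h x"] exI[of _ "\<lambda>j x. H j x - k x"]) simp
  then show ?thesis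
    using L2' mem_Q0D[OF hk] unfolding Qdot_def graph_closure_def by (auto intro!: L2_diff)
qed

lemma set_integral_inter_cball:
  fixes f :: "real^'n \<Rightarrow> complex"
  shows "(LINT x:(\<Omega> \<inter> cball 0 R)|lebesgue. f x) = integral\<^sup>L \<mu> (\<lambda>x. indicator (cball 0 R) x *\<^sub>R f x)"
  unfolding set_integral_eq_integral_\<mu>[symmetric] set_lebesgue_integral_def
  by (rule Bochner_Integration.integral_cong) (auto simp: indicator_inter_arith)

lemma integrable_indicator_cball:
  fixes f :: "real^'n \<Rightarrow> complex"
  assumes [measurable]: "f \<in> borel_measurable \<mu>" and bound: "\<And>x. x \<in> \<Omega> \<Longrightarrow> cmod (f x) \<le> B"
  shows "integrable \<mu> (\<lambda>x. indicator (cball 0 R) x *\<^sub>R f x)"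
proof (rule Bochner_Integration.integrable_bound)
  show "integrable \<mu> (\<lambda>x. (\<bar>B\<bar> * (1 + R^2)^2) * decay_weight x)"
    by (intro integrable_mult_right integrable_decay_weight_\<mu>)
  show "(\<lambda>x. indicator (cball 0 R) x *\<^sub>R f x) \<in> borel_measurable \<mu>"
    by (intro borel_measurable_scaleR borel_measurable_indicator')
      (auto simp: borel_closed[THEN sets_completionI_sets] sets_restrict_space)
  have "norm (indicator (cball 0 R) x *\<^sub>R f x) \<le> \<bar>B\<bar> * (1 + R^2)^2 * decay_weight x"
    if "x \<in> \<Omega>" "norm x \<le> R" for x
  proof -
    have "(1 + (norm x)^2)^2 \<le> (1 + R^2)^2"
      using that(2) by (intro power_mono add_left_mono) auto
    moreover have "0 < (1 + (norm x)^2)^2" by (intro zero_less_power add_pos_nonneg) auto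
    ultimately have "1 \<le> (1 + R^2)^2 * decay_weight x"
      by (simp add: decay_weight_def le_divide_eq)
    then have "\<bar>B\<bar> \<le> \<bar>B\<bar> * ((1 + R^2)^2 * decay_weight x)"
      by (simp add: mult_le_cancel_left1)
    then show ?thesis using bound[OF that(1)] that(2) by simp
  qed
  then show "AE x in \<mu>. norm (indicator (cball 0 R) x *\<^sub>R f x) \<le> norm (\<bar>B\<bar> * (1 + R^2)^2 * decay_weight x)"
    by (intro AE_I2) (auto simp: indicator_def)
qed

lemma tendsto_integral_indicator_cball:
  fixes F :: "real^'n \<Rightarrow> complex"
  assumes [measurable]: "F \<in> borel_measurable \<mu>"
    and bound: "\<And>x. x \<in> \<Omega> \<Longrightarrow> cmod (F x) \<le> C * decay_weight x"
  shows "integrable \<mu> F"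
    and "((\<lambda>R. integral\<^sup>L \<mu> (\<lambda>x. indicator (cball 0 R) x *\<^sub>R F x)) \<longlongrightarrow> integral\<^sup>L \<mu> F) at_top"
proof -
  have C_nonneg: "0 \<le> C * decay_weight x" if "x \<in> \<Omega>" for x
    using order_trans[OF norm_ge_zero bound[OF that]] .
  with bound have dominated: "AE x in \<mu>. norm (indicator (cball 0 R) x *\<^sub>R F x) \<le> C * decay_weight x" for R
    by (intro AE_I2) (auto simp: indicator_def)
  have "AE x in \<mu>. norm (F x) \<le> norm (C * decay_weight x)"
    using bound C_nonneg by (intro AE_I2) simp
  then show "integrable \<mu> F"
    by (rule Bochner_Integration.integrable_bound[OF integrable_mult_right[OF integrable_decay_weight_\<mu>], rotated])
      measurable
  show "((\<lambda>R. integral\<^sup>L \<mu> (\<lambda>x. indicator (cball 0 R) x *\<^sub>R F x)) \<longlongrightarrow> integral\<^sup>L \<mu> F) at_top"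
  proof (rule integral_dominated_convergence_at_top[OF _ _ integrable_mult_right[where c=C, OF integrable_decay_weight_\<mu>]])
    show "(\<lambda>x. indicator (cball 0 R) x *\<^sub>R F x) \<in> borel_measurable \<mu>" for R
      by (intro borel_measurable_scaleR borel_measurable_indicator')
        (auto simp: borel_closed[THEN sets_completionI_sets] sets_restrict_space)
    have "((\<lambda>R. indicator (cball 0 R) x *\<^sub>R F x) \<longlongrightarrow> F x) at_top" for x
      by (intro tendsto_eventually eventually_mono[OF eventually_ge_at_top[of "norm x"]]) simp
    then show "AE x in \<mu>. ((\<lambda>R. indicator (cball 0 R) x *\<^sub>R F x) \<longlongrightarrow> F x) at_top"
      by simp
  qed (measurable, intro always_eventually allI dominated)
qed

lemma norm_cnj_e_mult_psi_le:
  assumes "z \<notin> complex_of_real ` {0..}"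
  obtains C where "\<And>x. x \<in> \<Omega> \<Longrightarrow> cmod (cnj (e x) * psi e z x) \<le> C"
proof -
  obtain c where c: "c > 0" "\<And>s. s \<ge> 0 \<Longrightarrow> c * (1 + s) \<le> cmod (complex_of_real s - z)"
    using off_ray_norm_lower_bound[OF assms] by blast
  have "cmod (cnj (e x) * psi e z x) \<le> M * (M / c)" if "x \<in> \<Omega>" for x
  proof -
    have "cmod (psi e z x) \<le> cmod (e x) / (c * (1 + (norm x)^2))" by (rule norm_psi_le[OF c])
    also have "\<dots> \<le> cmod (e x) / c"
      using c(1) by (intro divide_left_mono) (auto simp: add_pos_nonneg)
    also have "\<dots> \<le> M / c" using bounded_e that c(1) by (simp add: divide_right_mono)
    finally show ?thesis
      unfolding norm_mult complex_mod_cnj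
      using bounded_e that order_trans[OF norm_ge_zero] by (intro mult_mono) auto
  qed
  then show ?thesis using that by blast
qed

lemma norm_cnj_e_mult_psi_diff_le:
  assumes l: "l \<notin> complex_of_real ` {0..}" and m: "m \<notin> complex_of_real ` {0..}"
  obtains C where "\<And>x. x \<in> \<Omega> \<Longrightarrow> cmod (cnj (e x) * (psi e l x - psi e m x)) \<le> C * decay_weight x"
proof -
  obtain cl where cl: "cl > 0" "\<And>s. s \<ge> 0 \<Longrightarrow> cl * (1 + s) \<le> cmod (complex_of_real s - l)"
    using off_ray_norm_lower_bound[OF l] by blast
  obtain cm where cm: "cm > 0" "\<And>s. s \<ge> 0 \<Longrightarrow> cm * (1 + s) \<le> cmod (complex_of_real s - m)"
    using off_ray_norm_lower_bound[OF m] by blast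
  have "cmod (cnj (e x) * (psi e l x - psi e m x)) \<le> M^2 * cmod (l - m) / (cl * cm) * decay_weight x"
    if x: "x \<in> \<Omega>" for x
  proof -
    define s where "s = (norm x)^2"
    have "s \<ge> 0" unfolding s_def by simp
    have "psi e l x - psi e m x = e x * (l - m) / ((complex_of_real s - l) * (complex_of_real s - m))"
      using of_real_minus_off_ray_nonzero[OF l \<open>s \<ge> 0\<close>] of_real_minus_off_ray_nonzero[OF m \<open>s \<ge> 0\<close>]
      unfolding psi_def s_def by (simp add: field_simps)
    then have "cmod (cnj (e x) * (psi e l x - psi e m x))
        = (cmod (e x))^2 * cmod (l - m) / (cmod (complex_of_real s - l) * cmod (complex_of_real s - m))"
      by (simp add: norm_mult norm_divide power2_eq_square)
    also have "\<dots> \<le> M^2 * cmod (l - m) / ((cl * (1 + s)) * (cm * (1 + s)))"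
    proof (rule frac_le)
      show "(cmod (e x))^2 * cmod (l - m) \<le> M^2 * cmod (l - m)"
        using bounded_e x by (intro mult_right_mono power_mono) auto
      show "0 < cl * (1 + s) * (cm * (1 + s))"
        using cl cm \<open>s \<ge> 0\<close> by (intro mult_pos_pos) auto
      show "cl * (1 + s) * (cm * (1 + s)) \<le> cmod (complex_of_real s - l) * cmod (complex_of_real s - m)"
        using cl cm \<open>s \<ge> 0\<close> by (intro mult_mono) auto
    qed simp
    also have "\<dots> = M^2 * cmod (l - m) / (cl * cm) * decay_weight x"
      unfolding decay_weight_def s_def by (simp add: power2_eq_square field_simps)
    finally show ?thesis .
  qed
  then show ?thesis using that by blast
qed

end

locale renormalised_profile = bounded_profile +
  fixes d :: "real \<Rightarrow> complex" and g :: "complex \<Rightarrow> complex"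
  assumes truncated_integral_asymptotics:
    "\<And>z. z \<notin> complex_of_real ` {0..} \<Longrightarrow>
      ((\<lambda>R. (LINT x:(\<Omega> \<inter> cball 0 R)|lebesgue.
                complex_of_real ((cmod (e x))^2) / (complex_of_real ((norm x)^2) - z))
            - d R - g z) \<longlongrightarrow> 0) at_top"
begin

lemma integral_cnj_e_mult_psi_diff:
  assumes l: "l \<notin> complex_of_real ` {0..}" and m: "m \<notin> complex_of_real ` {0..}"
  shows "integrable \<mu> (\<lambda>x. cnj (e x) * (psi e l x - psi e m x))"
    and "integral\<^sup>L \<mu> (\<lambda>x. cnj (e x) * (psi e l x - psi e m x)) = g l - g m"
proof -
  define A where "A z x = cnj (e x) * psi e z x" for z x
  have A_measurable [measurable]: "A z \<in> borel_measurable \<mu>" for z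
    unfolding A_def psi_def by measurable
  have A_eq: "A z x = complex_of_real ((cmod (e x))^2) / (complex_of_real ((norm x)^2) - z)" for z x
    unfolding A_def psi_def complex_norm_square by simp
  define F where "F x = A l x - A m x" for x
  have F_measurable: "F \<in> borel_measurable \<mu>" unfolding F_def by measurable
  have F_eq: "F x = cnj (e x) * (psi e l x - psi e m x)" for x
    unfolding F_def A_def by (simp add: algebra_simps)
  obtain C where "\<And>x. x \<in> \<Omega> \<Longrightarrow> cmod (F x) \<le> C * decay_weight x"
    using norm_cnj_e_mult_psi_diff_le[OF l m] unfolding F_eq by blast
  note exhaustion = tendsto_integral_indicator_cball[OF F_measurable this]
  then show "integrable \<mu> (\<lambda>x. cnj (e x) * (psi e l x - psi e m x))"
    unfolding F_eq by simp
  define S where "S R = integral\<^sup>L \<mu> (\<lambda>x. indicator (cball 0 R) x *\<^sub>R F x)" for R :: real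
  have "(S \<longlongrightarrow> integral\<^sup>L \<mu> F) at_top"
    unfolding S_def using exhaustion(2) by simp
  moreover have "S = (\<lambda>R. (LINT x:(\<Omega> \<inter> cball 0 R)|lebesgue. A l x) - (LINT x:(\<Omega> \<inter> cball 0 R)|lebesgue. A m x))"
  proof
    fix R
    obtain Cl where "\<And>x. x \<in> \<Omega> \<Longrightarrow> cmod (A l x) \<le> Cl"
      using norm_cnj_e_mult_psi_le[OF l] unfolding A_def by blast
    moreover obtain Cm where "\<And>x. x \<in> \<Omega> \<Longrightarrow> cmod (A m x) \<le> Cm"
      using norm_cnj_e_mult_psi_le[OF m] unfolding A_def by blast
    ultimately show "S R = (LINT x:(\<Omega> \<inter> cball 0 R)|lebesgue. A l x) - (LINT x:(\<Omega> \<inter> cball 0 R)|lebesgue. A m x)"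
      unfolding S_def F_def set_integral_inter_cball scaleR_diff_right
      by (intro Bochner_Integration.integral_diff integrable_indicator_cball[OF A_measurable]) auto
  qed
  moreover have "((\<lambda>R. ((LINT x:(\<Omega> \<inter> cball 0 R)|lebesgue. A l x) - d R - g l)
      - ((LINT x:(\<Omega> \<inter> cball 0 R)|lebesgue. A m x) - d R - g m) + (g l - g m)) \<longlongrightarrow> 0 - 0 + (g l - g m)) at_top"
    unfolding A_eq by (intro tendsto_add tendsto_diff truncated_integral_asymptotics l m tendsto_const)
  ultimately have "(S \<longlongrightarrow> g l - g m) at_top" by simp
  with \<open>(S \<longlongrightarrow> integral\<^sup>L \<mu> F) at_top\<close> show "integral\<^sup>L \<mu> (\<lambda>x. cnj (e x) * (psi e l x - psi e m x)) = g l - g m"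
    using tendsto_unique[OF trivial_limit_at_top_linorder] unfolding F_eq by blast
qed

lemma ae_e_eq_0_if_g_i_eq_g_minus_i:
  assumes "g \<i> = g (- \<i>)"
  shows "AE x in \<mu>. e x = 0"
proof -
  define u where "u x = 2 * (cmod (e x))^2 / ((norm x)^4 + 1)" for x
  have pos: "(norm x)^4 + 1 > 0" for x :: "real^'n" by (simp add: add_nonneg_pos)
  have cnj_e_psi_diff: "cnj (e x) * (psi e \<i> x - psi e (- \<i>) x) = \<i> * complex_of_real (u x)" for x
  proof -
    define s where "s = (norm x)^2"
    have "complex_of_real s - \<i> \<noteq> 0" "complex_of_real s + \<i> \<noteq> 0" by (auto simp: complex_eq_iff)
    moreover have "(complex_of_real s - \<i>) * (complex_of_real s + \<i>) = complex_of_real ((norm x)^4 + 1)"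
      unfolding s_def by (simp add: algebra_simps power2_eq_square power4_eq_xxxx)
    ultimately show ?thesis
      using pos[of x] unfolding psi_def u_def s_def[symmetric]
      by (simp add: field_simps complex_norm_square[simplified])
  qed
  note diff = integral_cnj_e_mult_psi_diff[OF i_off_ray minus_i_off_ray]
  have "integrable \<mu> u"
    using integrable_Im[OF diff(1)] unfolding cnj_e_psi_diff by simp
  moreover have "integral\<^sup>L \<mu> u = 0"
    using diff(2) assms unfolding cnj_e_psi_diff by simp
  moreover have "AE x in \<mu>. 0 \<le> u x" unfolding u_def using pos by (intro AE_I2) simp
  ultimately have "AE x in \<mu>. u x = 0" using integral_nonneg_eq_0_iff_AE by blast
  then show ?thesis
  proof eventually_elim
    case (elim x)
    with pos[of x] show ?case by (simp add: u_def)
  qed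
qed

text \<open>\<open>K(\<lambda>)\<close> of the header, kept undivided by \<open>1 + e\<^sup>i\<^sup>\<theta>\<close>, which vanishes at \<open>\<theta> = \<pi>\<close>.\<close>

definition krein_denom :: "real \<Rightarrow> complex \<Rightarrow> complex" where
  "krein_denom \<theta> l = g \<i> + cis \<theta> * g (- \<i>) - (1 + cis \<theta>) * g l"

text \<open>Orthogonality of the corrected function to \<open>e\<close> is where the renormalised \<open>g\<close> enters:
  the defect \<open>\<langle>r, e\<rangle> = c K\<close> is cancelled by \<open>g(l) - g(m) = \<langle>\<psi>\<^sub>l - \<psi>\<^sub>m, e\<rangle>\<close> for \<open>m = \<plusminus>i\<close>.\<close>

lemma Q0_shift_decomposition:
  fixes c :: complex
  assumes l: "l \<notin> complex_of_real ` {0..}" and rq: "(r, q) \<in> Q0 \<Omega>"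
    and orth: "integral\<^sup>L \<mu> (\<lambda>x. cnj (e x) * r x) = c * krein_denom \<theta> l"
  obtains h k where "(h, k) \<in> Qdot_pre \<Omega> e"
    and "\<And>x. r x + c * (1 + cis \<theta>) * psi e l x = h x + c * (psi e \<i> x + cis \<theta> * psi e (- \<i>) x)"
    and "\<And>x. q x + l * (c * (1 + cis \<theta>)) * psi e l x
           = k x + c * (\<i> * psi e \<i> x - \<i> * cis \<theta> * psi e (- \<i>) x)"
proof -
  let ?E = "cis \<theta>"
  note rq' = mem_Q0D[OF rq]
  define h where "h x = r x + c * (1 + ?E) * psi e l x - c * (psi e \<i> x + ?E * psi e (- \<i>) x)" for x
  define k where "k x = q x + l * (c * (1 + ?E)) * psi e l x - c * (\<i> * psi e \<i> x - \<i> * ?E * psi e (- \<i>) x)" for x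
  have psi_L2: "psi e l \<in> L2 \<Omega>" "psi e \<i> \<in> L2 \<Omega>" "psi e (- \<i>) \<in> L2 \<Omega>"
    using psi_in_L2 l i_off_ray minus_i_off_ray by auto
  have "h \<in> L2 \<Omega>" "k \<in> L2 \<Omega>"
    unfolding h_def[abs_def] k_def[abs_def] by (intro L2_diff L2_add L2_cmult rq' psi_L2)+
  moreover have "AE x in \<mu>. k x = complex_of_real ((norm x)^2) * h x"
    using rq'(3)
  proof eventually_elim
    case (elim x)
    show ?case
      unfolding h_def k_def ring_distribs of_real_norm_sq_mult_psi[OF l] elim
        mult.left_commute[of "complex_of_real _"] of_real_norm_sq_mult_psi[OF i_off_ray]
        of_real_norm_sq_mult_psi[OF minus_i_off_ray]
      by (simp add: algebra_simps)
  qed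
  moreover have "integral\<^sup>L \<mu> (\<lambda>x. cnj (e x) * h x) = 0"
  proof -
    note diff_i = integral_cnj_e_mult_psi_diff[OF l i_off_ray]
      and diff_mi = integral_cnj_e_mult_psi_diff[OF l minus_i_off_ray]
    have "cnj (e x) * h x = cnj (e x) * r x + c * (cnj (e x) * (psi e l x - psi e \<i> x))
        + (c * ?E) * (cnj (e x) * (psi e l x - psi e (- \<i>) x))" for x
      unfolding h_def by (simp add: algebra_simps)
    then have "integral\<^sup>L \<mu> (\<lambda>x. cnj (e x) * h x) = integral\<^sup>L \<mu> (\<lambda>x. cnj (e x) * r x)
        + c * (g l - g \<i>) + (c * ?E) * (g l - g (- \<i>))"
      using integrable_cnj_e_mult_Q0[OF rq] diff_i diff_mi by simp
    then show ?thesis unfolding orth krein_denom_def by (simp add: algebra_simps)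
  qed
  ultimately have "(h, k) \<in> Qdot_pre \<Omega> e"
    unfolding Qdot_pre_def Q0_def aeq_iff set_integral_eq_integral_\<mu> by auto
  then show ?thesis by (rule that) (simp_all add: h_def k_def)
qed

lemma Qalpha_memI:
  assumes "(h, k) \<in> Qdot \<Omega> e" "f \<in> L2 \<Omega>" "G \<in> L2 \<Omega>"
    and "AE x in \<mu>. f x = h x + c * (psi e \<i> x + cis \<theta> * psi e (- \<i>) x)"
    and "AE x in \<mu>. G x = k x + c * (\<i> * psi e \<i> x - \<i> * cis \<theta> * psi e (- \<i>) x)"
  shows "(f, G) \<in> Qalpha \<Omega> e \<theta>"
  using assms unfolding Qalpha_def aeq_iff cis_conv_exp by blast

lemma Q0_shift_in_Qalpha:
  assumes l: "l \<notin> complex_of_real ` {0..}" and rq: "(r, q) \<in> Q0 \<Omega>"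
    and orth: "integral\<^sup>L \<mu> (\<lambda>x. cnj (e x) * r x) = c * krein_denom \<theta> l"
  shows "(\<lambda>x. r x + c * (1 + cis \<theta>) * psi e l x, \<lambda>x. q x + l * (c * (1 + cis \<theta>)) * psi e l x)
           \<in> Qalpha \<Omega> e \<theta>"
proof -
  obtain h k where "(h, k) \<in> Qdot_pre \<Omega> e"
    and "\<And>x. r x + c * (1 + cis \<theta>) * psi e l x = h x + c * (psi e \<i> x + cis \<theta> * psi e (- \<i>) x)"
    and "\<And>x. q x + l * (c * (1 + cis \<theta>)) * psi e l x
           = k x + c * (\<i> * psi e \<i> x - \<i> * cis \<theta> * psi e (- \<i>) x)"
    using Q0_shift_decomposition[OF l rq orth] by blast
  then show ?thesis
    using mem_Q0D[OF rq] psi_in_L2[OF l] Qdot_pre_subset_Qdot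
    by (intro Qalpha_memI[of h k] L2_add L2_cmult AE_I2) auto
qed

lemma Qalpha_diff_Q0_shift:
  assumes fG: "(f, G) \<in> Qalpha \<Omega> e \<theta>"
    and l: "l \<notin> complex_of_real ` {0..}" and rq: "(r, q) \<in> Q0 \<Omega>"
    and orth: "integral\<^sup>L \<mu> (\<lambda>x. cnj (e x) * r x) = c * krein_denom \<theta> l"
  shows "(\<lambda>x. f x - (r x + c * (1 + cis \<theta>) * psi e l x),
          \<lambda>x. G x - (q x + l * (c * (1 + cis \<theta>)) * psi e l x)) \<in> Qalpha \<Omega> e \<theta>"
proof -
  obtain h k where hk: "(h, k) \<in> Qdot_pre \<Omega> e"
    and f_shift: "\<And>x. r x + c * (1 + cis \<theta>) * psi e l x = h x + c * (psi e \<i> x + cis \<theta> * psi e (- \<i>) x)"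
    and G_shift: "\<And>x. q x + l * (c * (1 + cis \<theta>)) * psi e l x
           = k x + c * (\<i> * psi e \<i> x - \<i> * cis \<theta> * psi e (- \<i>) x)"
    using Q0_shift_decomposition[OF l rq orth] by blast
  obtain h' k' c' where h'k': "(h', k') \<in> Qdot \<Omega> e" "f \<in> L2 \<Omega>" "G \<in> L2 \<Omega>"
    "AE x in \<mu>. f x = h' x + c' * (psi e \<i> x + cis \<theta> * psi e (- \<i>) x)"
    "AE x in \<mu>. G x = k' x + c' * (\<i> * psi e \<i> x - \<i> * cis \<theta> * psi e (- \<i>) x)"
    using fG unfolding Qalpha_def aeq_iff cis_conv_exp by blast
  show ?thesis
  proof (rule Qalpha_memI[OF Qdot_diff_Qdot_pre[OF h'k'(1) hk], where c="c' - c"])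
    show "AE x in \<mu>. f x - (r x + c * (1 + cis \<theta>) * psi e l x)
        = h' x - h x + (c' - c) * (psi e \<i> x + cis \<theta> * psi e (- \<i>) x)"
      using h'k'(4) by eventually_elim (simp add: eq_diff_eq[THEN iffD2, OF f_shift[symmetric]] algebra_simps)
    show "AE x in \<mu>. G x - (q x + l * (c * (1 + cis \<theta>)) * psi e l x)
        = k' x - k x + (c' - c) * (\<i> * psi e \<i> x - \<i> * cis \<theta> * psi e (- \<i>) x)"
      using h'k'(5) by eventually_elim (simp add: eq_diff_eq[THEN iffD2, OF G_shift[symmetric]] algebra_simps)
    show "(\<lambda>x. f x - (r x + c * (1 + cis \<theta>) * psi e l x)) \<in> L2 \<Omega>"
      using h'k'(2) mem_Q0D(1)[OF rq] psi_in_L2[OF l] by (intro L2_diff L2_add L2_cmult)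
    show "(\<lambda>x. G x - (q x + l * (c * (1 + cis \<theta>)) * psi e l x)) \<in> L2 \<Omega>"
      using h'k'(3) mem_Q0D(2)[OF rq] psi_in_L2[OF l] by (intro L2_diff L2_add L2_cmult)
  qed
qed

lemma resolvent_Q0_eq:
  assumes l: "l \<notin> complex_of_real ` {0..}" and R0: "is_resolvent \<Omega> (Q0 \<Omega>) l R0"
    and "\<phi> \<in> L2 \<Omega>"
  shows "AE x in \<mu>. R0 \<phi> x = \<phi> x / (l - complex_of_real ((norm x)^2))"
  using mem_Q0D(3)[OF is_resolventD(1)[OF R0 \<open>\<phi> \<in> L2 \<Omega>\<close>]]
proof eventually_elim
  case (elim x)
  have "l - complex_of_real ((norm x)^2) \<noteq> 0"
    using of_real_minus_off_ray_nonzero[OF l, of "(norm x)^2"] by auto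
  with elim show ?case by (simp add: field_simps)
qed

text \<open>If \<open>K(\<lambda>) = 0\<close> then \<open>\<psi>\<^sub>\<lambda>\<close> is an eigenvector of \<open>Q\<^sub>\<alpha>\<close>, contradicting \<open>\<lambda> \<in> \<rho>(Q\<^sub>\<alpha>)\<close> unless \<open>e = 0\<close>.\<close>

lemma ae_e_eq_0_if_krein_denom_eq_0:
  assumes l: "l \<notin> complex_of_real ` {0..}" and Ra: "is_resolvent \<Omega> (Qalpha \<Omega> e \<theta>) l Ra"
    and "1 + cis \<theta> \<noteq> 0" "krein_denom \<theta> l = 0"
  shows "AE x in \<mu>. e x = 0"
proof -
  have "((\<lambda>x. 0), (\<lambda>x. 0)) \<in> Q0 \<Omega>" unfolding Q0_def aeq_def using zero_in_L2 by simp
  then have "(\<lambda>x. 0 + 1 * (1 + cis \<theta>) * psi e l x, \<lambda>x. 0 + l * (1 * (1 + cis \<theta>)) * psi e l x)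
      \<in> Qalpha \<Omega> e \<theta>"
    by (rule Q0_shift_in_Qalpha[OF l]) (simp add: assms(4))
  then have "aeq \<Omega> (\<lambda>x. 0 + 1 * (1 + cis \<theta>) * psi e l x) (\<lambda>x. 0)"
    by (rule is_resolventD(2)[OF Ra]) (simp add: aeq_def)
  then show ?thesis
    unfolding aeq_iff
  proof eventually_elim
    case (elim x)
    with assms(3) of_real_minus_off_ray_nonzero[OF l, of "(norm x)^2"] show ?case
      by (simp add: psi_def)
  qed
qed

lemma resolvent_Qalpha_eq:
  assumes l: "l \<notin> complex_of_real ` {0..}"
    and Ra: "is_resolvent \<Omega> (Qalpha \<Omega> e \<theta>) l Ra" and R0: "is_resolvent \<Omega> (Q0 \<Omega>) l R0"
    and \<phi>: "\<phi> \<in> L2 \<Omega>"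
    and orth: "integral\<^sup>L \<mu> (\<lambda>x. cnj (e x) * R0 \<phi> x) = c * krein_denom \<theta> l"
  shows "AE x in \<mu>. Ra \<phi> x = R0 \<phi> x + c * (1 + cis \<theta>) * psi e l x"
proof -
  define D where "D x = Ra \<phi> x - (R0 \<phi> x + c * (1 + cis \<theta>) * psi e l x)" for x
  have "(D, \<lambda>x. (l * Ra \<phi> x - \<phi> x) - ((l * R0 \<phi> x - \<phi> x) + l * (c * (1 + cis \<theta>)) * psi e l x))
      \<in> Qalpha \<Omega> e \<theta>"
    unfolding D_def[abs_def]
    by (rule Qalpha_diff_Q0_shift[OF is_resolventD(1)[OF Ra \<phi>] l is_resolventD(1)[OF R0 \<phi>] orth])
  then have "aeq \<Omega> D (\<lambda>x. 0)"
    by (rule is_resolventD(2)[OF Ra]) (simp add: aeq_def D_def algebra_simps)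
  then show ?thesis unfolding aeq_iff D_def by simp
qed

lemma krein_coefficient:
  fixes \<theta> \<alpha> :: real and a b J :: complex
  assumes "0 < \<theta>" "\<theta> < 2 * pi" and \<alpha>: "\<alpha> = cot (\<theta> / 2)"
    and a: "a = (g \<i> - g (- \<i>)) / (2 * \<i>)" and b: "b = (g \<i> + g (- \<i>)) / 2"
    and eigen: "1 + cis \<theta> \<noteq> 0 \<Longrightarrow> krein_denom \<theta> l = 0 \<Longrightarrow> AE x in \<mu>. e x = 0"
    and J: "(AE x in \<mu>. e x = 0) \<Longrightarrow> J = 0"
  obtains c where "J = c * krein_denom \<theta> l"
    and "c * (1 + cis \<theta>) = (if \<alpha> = 0 then 0 else 1 / (a / complex_of_real \<alpha> + b - g l)) * J"
proof (cases "\<theta> = pi")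
  case True
  then have "\<alpha> = 0" "krein_denom \<theta> l = g \<i> - g (- \<i>)"
    unfolding \<alpha> krein_denom_def cot_def by simp_all
  show ?thesis
  proof (cases "g \<i> = g (- \<i>)")
    case True
    then have "J = 0" using J ae_e_eq_0_if_g_i_eq_g_minus_i by blast
    then show ?thesis by (intro that[of 0]) simp_all
  next
    case False
    with \<open>\<alpha> = 0\<close> \<open>krein_denom \<theta> l = g \<i> - g (- \<i>)\<close> \<open>\<theta> = pi\<close> show ?thesis
      by (intro that[of "J / krein_denom \<theta> l"]) simp_all
  qed
next
  case False
  note half_angle = cis_cot_half(1,2)[OF assms(1,2) False]
    cis_cot_half(3)[OF assms(1,2) False, of "g \<i>" "g (- \<i>)" "g l"]
  define D where "D = a / complex_of_real \<alpha> + b - g l"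
  have K: "krein_denom \<theta> l = (1 + cis \<theta>) * D"
    unfolding krein_denom_def D_def a b \<alpha> by (rule half_angle(3))
  show ?thesis
  proof (cases "D = 0")
    case True
    then have "J = 0" using J eigen half_angle(1) K by simp
    then show ?thesis using that[of 0] by simp
  next
    case False
    have "\<alpha> \<noteq> 0" using half_angle(2) \<alpha> by simp
    then have "(if \<alpha> = 0 then 0 else 1 / (a / complex_of_real \<alpha> + b - g l)) = 1 / D"
      unfolding D_def by simp
    moreover have "J = J / ((1 + cis \<theta>) * D) * krein_denom \<theta> l"
      using K half_angle(1) False by simp
    moreover have "J / ((1 + cis \<theta>) * D) * (1 + cis \<theta>) = 1 / D * J"
      using half_angle(1) by simp
    ultimately show ?thesis by (intro that[of "J / ((1 + cis \<theta>) * D)"]) simp_all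
  qed
qed

lemma resolvent_Qalpha_formula:
  fixes \<theta> \<alpha> :: real and a b :: complex
  assumes "0 < \<theta>" "\<theta> < 2 * pi" "\<alpha> = cot (\<theta> / 2)"
    and "a = (g \<i> - g (- \<i>)) / (2 * \<i>)" "b = (g \<i> + g (- \<i>)) / 2"
    and l: "l \<notin> complex_of_real ` {0..}"
    and Ra: "is_resolvent \<Omega> (Qalpha \<Omega> e \<theta>) l Ra" and R0: "is_resolvent \<Omega> (Q0 \<Omega>) l R0"
    and \<phi>: "\<phi> \<in> L2 \<Omega>"
  shows "aeq \<Omega> (Ra \<phi>) (\<lambda>x. R0 \<phi> x
           + (if \<alpha> = 0 then 0 else 1 / (a / complex_of_real \<alpha> + b - g l))
             * (LINT y:\<Omega>|lebesgue. cnj (e y) * (\<phi> y / (l - complex_of_real ((norm y)^2))))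
             * psi e l x)"
proof -
  define J where "J = (LINT y:\<Omega>|lebesgue. cnj (e y) * (\<phi> y / (l - complex_of_real ((norm y)^2))))"
  have [measurable]: "\<phi> \<in> borel_measurable \<mu>" "R0 \<phi> \<in> borel_measurable \<mu>"
    using \<phi> is_resolventD(1)[OF R0 \<phi>] by (auto intro: L2_borel_measurable dest: mem_Q0D(1))
  have "AE x in \<mu>. cnj (e x) * R0 \<phi> x = cnj (e x) * (\<phi> x / (l - complex_of_real ((norm x)^2)))"
    using resolvent_Q0_eq[OF l R0 \<phi>] by eventually_elim simp
  moreover have "(\<lambda>x. cnj (e x) * R0 \<phi> x) \<in> borel_measurable \<mu>"
    and "(\<lambda>x. cnj (e x) * (\<phi> x / (l - complex_of_real ((norm x)^2)))) \<in> borel_measurable \<mu>"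
    by measurable
  ultimately have J_eq: "integral\<^sup>L \<mu> (\<lambda>x. cnj (e x) * R0 \<phi> x) = J"
    unfolding J_def set_integral_eq_integral_\<mu> by (intro integral_cong_AE)
  have J_zero: "J = 0" if "AE x in \<mu>. e x = 0"
  proof -
    have "AE x in \<mu>. cnj (e x) * (\<phi> x / (l - complex_of_real ((norm x)^2))) = 0"
      using that by eventually_elim simp
    then show ?thesis unfolding J_def set_integral_eq_integral_\<mu> by (rule integral_eq_zero_AE)
  qed
  obtain c where "J = c * krein_denom \<theta> l"
    and c: "c * (1 + cis \<theta>) = (if \<alpha> = 0 then 0 else 1 / (a / complex_of_real \<alpha> + b - g l)) * J"
    using krein_coefficient[OF assms(1-5) ae_e_eq_0_if_krein_denom_eq_0[OF l Ra] J_zero] by blast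
  with J_eq have "AE x in \<mu>. Ra \<phi> x = R0 \<phi> x + c * (1 + cis \<theta>) * psi e l x"
    by (intro resolvent_Qalpha_eq[OF l Ra R0 \<phi>]) simp
  then show ?thesis
    unfolding aeq_iff J_def[symmetric] c by simp
qed

end

theorem proposition2p9:
  fixes \<Omega> :: "(real^'n) set" and e :: "real^'n \<Rightarrow> complex"
    and d :: "real \<Rightarrow> complex" and g :: "complex \<Rightarrow> complex"
    and \<theta> \<alpha> :: real and a b l :: complex
    and Ra R0 :: "(real^'n \<Rightarrow> complex) \<Rightarrow> (real^'n \<Rightarrow> complex)"
  assumes "CARD('n) \<in> {1, 2, 3}"
    and "\<Omega> \<in> sets lebesgue" and "\<not> bounded \<Omega>"
    and "set_borel_measurable lebesgue \<Omega> e" and "\<exists>M. \<forall>x\<in>\<Omega>. cmod (e x) \<le> M"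
    and "\<forall>z. z \<notin> complex_of_real ` {0..} \<longrightarrow>
           (\<lambda>N. cmod ((LINT x:(\<Omega> \<inter> cball 0 N)|lebesgue.
                     complex_of_real ((cmod (e x))^2) / (complex_of_real ((norm x)^2) - z))
                   - d N - g z))
           \<in> o[at_top](\<lambda>N. N powr (real (CARD('n) div 2) - 1))"
    and "a = (g \<i> - g (- \<i>)) / (2 * \<i>)" and "b = (g \<i> + g (- \<i>)) / 2"
    and "0 < \<theta>" and "\<theta> < 2 * pi" and "\<alpha> = cot (\<theta> / 2)"
    and "l \<notin> complex_of_real ` {0..}"
    and "is_resolvent \<Omega> (Qalpha \<Omega> e \<theta>) l Ra"
    and "is_resolvent \<Omega> (Q0 \<Omega>) l R0"
  shows "(\<forall>\<phi> \<in> L2 \<Omega>. aeq \<Omega> (Ra \<phi>)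
            (\<lambda>x. R0 \<phi> x
                 + (if \<alpha> = 0 then 0 else 1 / (a / complex_of_real \<alpha> + b - g l))
                   * (LINT y:\<Omega>|lebesgue. cnj (e y) * (\<phi> y / (l - complex_of_real ((norm y)^2))))
                   * psi e l x))
         \<and> trace_class \<Omega> (\<lambda>\<phi> x. Ra \<phi> x - R0 \<phi> x)"
proof -
  obtain M where M: "\<forall>x\<in>\<Omega>. cmod (e x) \<le> M" using assms(5) by blast
  have "real (CARD('n) div 2) - 1 \<le> 0" using assms(1) by auto
  note tendsto_0 = smallo_powr_nonpos_tendsto_zero[OF assms(6)[rule_format] this]
  interpret renormalised_profile \<Omega> e M d g
  proof
    show "CARD('n) \<le> 3" using assms(1) by auto
  qed (use assms(2,4) M tendsto_0 in \<open>simp_all add: tendsto_norm_zero_iff\<close>)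
  have formula: "\<forall>\<phi> \<in> L2 \<Omega>. aeq \<Omega> (Ra \<phi>)
      (\<lambda>x. R0 \<phi> x + (if \<alpha> = 0 then 0 else 1 / (a / complex_of_real \<alpha> + b - g l))
        * (LINT y:\<Omega>|lebesgue. cnj (e y) * (\<phi> y / (l - complex_of_real ((norm y)^2)))) * psi e l x)"
    using resolvent_Qalpha_formula[OF assms(9-11,7,8,12-14)] by blast
  with trace_class_resolvent_difference[OF assms(12)] show ?thesis by blast
qed

end
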